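(* Assume that $N$ is a semi-free DG $B$-module. Let $N'$ be a second semi-free DG $B$-module built in the same way from modules $M_i'$ and maps $\xi_i'$, $\tau_i'$, $\delta_i'$, and $\alpha_i'$. Fix an integer $p$. A sequence of $R$-module homomorphisms $\{S_i\colon N_i\to N'_{i+p}\}$ is a DG $B$-module homomorphism $N\to N'$ of degree $p$ if and only if it is a degree-$p$ homomorphism $N\to N'$ of the underlying $R$-complexes such that for all integers $i$ we have $S_i=\begin{bmatrix}(-1)^pz_{i-1} & v_i \\ 0 & z_i\end{bmatrix}$ for some $z_i\colon M_i\to M'_{i+p}$ and $v_i\colon M_i\to M'_{i+p-1}$ and $v_{i+j}(\gamma_{i,s}m_j)=(-1)^{i(p+1)}\gamma_{i,s}v_j(m_j)$ and $z_{i+j}(\gamma_{i,s}m_j)=(-1)^{ip}\gamma_{i,s}z_j(m_j)$ for $s=1,\ldots,r_i$ and for all $m_j\in M_j$ for each integer $j$.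
   Context: Let $R$ be a commutative noetherian ring. Let $A$ be a (commutative, positively graded) DG $R$-algebra such that each $A_i$ is free over $R$ of finite rank, with fixed basis $\{\gamma_{i,1},\ldots,\gamma_{i,r_i}\}$ of $A_i$. Let $t\in R$ and $B=K^R(t)\otimes_R A$, where $K^R(t)$ is the Koszul complex on $t$; identify $B_i$ with $A_{i-1}\oplus A_i$ (column vectors). For cardinals $\beta_i$ ($\beta_i=0$ for $i\ll0$) set $M_i=\bigoplus_{j\ge0}A_j^{(\beta_{i-j})}$. Given $R$-linear maps $\xi_i\colon M_i\to M_{i-1}$, $\tau_i\colon M_i\to M_i$, $\delta_i\colon M_i\to M_{i-2}$, $\alpha_i\colon M_i\to M_{i-1}$, $N$ is the sequence with $N_i=M_{i-1}\oplus M_i$ and $\partial^N_i=\left[\begin{smallmatrix}\xi_{i-1}&\delta_i\\ \tau_{i-1}&\alpha_i\end{smallmatrix}\right]$, with $B$ acting by $\left[\begin{smallmatrix}a_{i-1}\\ a_i\end{smallmatrix}\right]\left[\begin{smallmatrix}m_{j-1}\\ m_j\end{smallmatrix}\right]=\left[\begin{smallmatrix}a_{i-1}m_j+(-1)^ia_im_{j-1}\\ a_im_j\end{smallmatrix}\right]$. A DG $B$-module homomorphism of degree $p$ is an $R$-complex homomorphism $f$ of degree $p$ with $f(bn)=(-1)^{p|b|}bf(n)$. *)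

theory Defs
  imports Complex_Main "HOL-Library.Function_Algebras" "HOL-Library.Product_Plus"
begin

definition sgnx :: "int \<Rightarrow> 'x::ab_group_add \<Rightarrow> 'x" where
  "sgnx k x = (if even k then x else - x)"

definition noetherian_cring :: "'r::comm_ring_1 itself \<Rightarrow> bool" where
  "noetherian_cring _ \<longleftrightarrow>
     (\<forall>I::'r set. module.subspace ((*) :: 'r \<Rightarrow> 'r \<Rightarrow> 'r) I \<longrightarrow>
        (\<exists>F. finite F \<and> I = module.span ((*) :: 'r \<Rightarrow> 'r \<Rightarrow> 'r) F))"

definition rlin :: "('r \<Rightarrow> 'x \<Rightarrow> 'x) \<Rightarrow> ('r \<Rightarrow> 'y \<Rightarrow> 'y) \<Rightarrow> 'x set \<Rightarrow> 'y set
                     \<Rightarrow> ('x::ab_group_add \<Rightarrow> 'y::ab_group_add) \<Rightarrow> bool" where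
  "rlin sc sc' X Y f \<longleftrightarrow> f ` X \<subseteq> Y \<and>
     (\<forall>x\<in>X. \<forall>y\<in>X. f (x + y) = f x + f y) \<and>
     (\<forall>c. \<forall>x\<in>X. f (sc c x) = sc' c (f x))"

text \<open>A is given inside an ambient R-module of type 'a (scalar action scA);
  Ac i is the homogeneous component A_i, mulA the product, oneA the unit,
  dA the differential.\<close>

definition cdga :: "('r::comm_ring_1 \<Rightarrow> 'a::ab_group_add \<Rightarrow> 'a) \<Rightarrow> (int \<Rightarrow> 'a set)
                    \<Rightarrow> ('a \<Rightarrow> 'a \<Rightarrow> 'a) \<Rightarrow> 'a \<Rightarrow> ('a \<Rightarrow> 'a) \<Rightarrow> bool" where
  "cdga scA Ac mulA oneA dA \<longleftrightarrow>
     module scA \<and>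
     (\<forall>i. module.subspace scA (Ac i)) \<and>
     (\<forall>i j. i \<noteq> j \<longrightarrow> Ac i \<inter> Ac j = {0}) \<and>
     (\<forall>i<0. Ac i = {0}) \<and>
     (\<forall>i j. \<forall>a\<in>Ac i. \<forall>b\<in>Ac j. mulA a b \<in> Ac (i + j)) \<and>
     (\<forall>i j. \<forall>a\<in>Ac i. \<forall>a'\<in>Ac i. \<forall>b\<in>Ac j.
        mulA (a + a') b = mulA a b + mulA a' b \<and> mulA b (a + a') = mulA b a + mulA b a') \<and>
     (\<forall>i j c. \<forall>a\<in>Ac i. \<forall>b\<in>Ac j.
        mulA (scA c a) b = scA c (mulA a b) \<and> mulA a (scA c b) = scA c (mulA a b)) \<and>
     (\<forall>i j k. \<forall>a\<in>Ac i. \<forall>b\<in>Ac j. \<forall>c\<in>Ac k. mulA (mulA a b) c = mulA a (mulA b c)) \<and>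
     oneA \<in> Ac 0 \<and>
     (\<forall>i. \<forall>a\<in>Ac i. mulA oneA a = a \<and> mulA a oneA = a) \<and>
     (\<forall>i j. \<forall>a\<in>Ac i. \<forall>b\<in>Ac j. mulA a b = sgnx (i * j) (mulA b a)) \<and>
     (\<forall>i. odd i \<longrightarrow> (\<forall>a\<in>Ac i. mulA a a = 0)) \<and>
     (\<forall>i. \<forall>a\<in>Ac i. dA a \<in> Ac (i - 1)) \<and>
     (\<forall>i. \<forall>a\<in>Ac i. \<forall>b\<in>Ac i. dA (a + b) = dA a + dA b) \<and>
     (\<forall>i c. \<forall>a\<in>Ac i. dA (scA c a) = scA c (dA a)) \<and>
     (\<forall>i. \<forall>a\<in>Ac i. dA (dA a) = 0) \<and>
     (\<forall>i j. \<forall>a\<in>Ac i. \<forall>b\<in>Ac j.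
        dA (mulA a b) = mulA (dA a) b + sgnx i (mulA a (dA b)))"

definition fixed_bases :: "('r::comm_ring_1 \<Rightarrow> 'a::ab_group_add \<Rightarrow> 'a) \<Rightarrow> (int \<Rightarrow> 'a set)
                           \<Rightarrow> (int \<Rightarrow> nat) \<Rightarrow> (int \<Rightarrow> nat \<Rightarrow> 'a) \<Rightarrow> bool" where
  "fixed_bases scA Ac r gam \<longleftrightarrow>
     (\<forall>i. (\<forall>s\<in>{1..r i}. gam i s \<in> Ac i) \<and> inj_on (gam i) {1..r i} \<and>
          module.independent scA (gam i ` {1..r i}) \<and>
          module.span scA (gam i ` {1..r i}) = Ac i)"

text \<open>E k is an index set of cardinality beta_k.  An element of
  M_i = (+)_j A_j^(beta_(i-j)) is a finitely supported m with m j e in A_j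
  and m j e = 0 unless e \<in> E (i - j).\<close>

type_synonym ('e, 'a) melt = "int \<Rightarrow> 'e \<Rightarrow> 'a"

definition Mcar :: "(int \<Rightarrow> 'a::zero set) \<Rightarrow> (int \<Rightarrow> 'e set) \<Rightarrow> int \<Rightarrow> ('e, 'a) melt set" where
  "Mcar Ac E i = {m. (\<forall>j e. m j e \<in> Ac j) \<and> (\<forall>j e. m j e \<noteq> 0 \<longrightarrow> e \<in> E (i - j)) \<and>
                     finite {(j, e). m j e \<noteq> 0}}"

definition scM :: "('r \<Rightarrow> 'a \<Rightarrow> 'a) \<Rightarrow> 'r \<Rightarrow> ('e, 'a) melt \<Rightarrow> ('e, 'a) melt" where
  "scM scA c m = (\<lambda>j e. scA c (m j e))"

definition actM :: "('a \<Rightarrow> 'a \<Rightarrow> 'a) \<Rightarrow> int \<Rightarrow> 'a \<Rightarrow> ('e, 'a) melt \<Rightarrow> ('e, 'a) melt" where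
  "actM mulA k a m = (\<lambda>j e. mulA a (m (j - k) e))"

section \<open>B = K(t) (x) A and the DG B-module N\<close>

definition Bcar :: "(int \<Rightarrow> 'a set) \<Rightarrow> int \<Rightarrow> ('a \<times> 'a) set" where
  "Bcar Ac i = Ac (i - 1) \<times> Ac i"

definition dB :: "('r \<Rightarrow> 'a \<Rightarrow> 'a) \<Rightarrow> ('a \<Rightarrow> 'a) \<Rightarrow> 'r \<Rightarrow> 'a \<times> 'a \<Rightarrow> 'a::ab_group_add \<times> 'a" where
  "dB scA dA t b = (- dA (fst b), scA t (fst b) + dA (snd b))"

definition Ncar :: "(int \<Rightarrow> 'a::zero set) \<Rightarrow> (int \<Rightarrow> 'e set) \<Rightarrow> int
                    \<Rightarrow> (('e, 'a) melt \<times> ('e, 'a) melt) set" where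
  "Ncar Ac E i = Mcar Ac E (i - 1) \<times> Mcar Ac E i"

definition scN :: "('r \<Rightarrow> 'a \<Rightarrow> 'a) \<Rightarrow> 'r \<Rightarrow> ('e, 'a) melt \<times> ('e, 'a) melt
                   \<Rightarrow> ('e, 'a) melt \<times> ('e, 'a) melt" where
  "scN scA c n = (scM scA c (fst n), scM scA c (snd n))"

definition actN :: "('a \<Rightarrow> 'a \<Rightarrow> 'a::ab_group_add) \<Rightarrow> int \<Rightarrow> 'a \<times> 'a
                    \<Rightarrow> ('e, 'a) melt \<times> ('e, 'a) melt \<Rightarrow> ('e, 'a) melt \<times> ('e, 'a) melt" where
  "actN mulA i b n =
     (actM mulA (i - 1) (fst b) (snd n) + sgnx i (actM mulA i (snd b) (fst n)),
      actM mulA i (snd b) (snd n))"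

definition dN :: "(int \<Rightarrow> ('e, 'a) melt \<Rightarrow> ('e, 'a) melt) \<Rightarrow> (int \<Rightarrow> ('e, 'a) melt \<Rightarrow> ('e, 'a) melt)
                  \<Rightarrow> (int \<Rightarrow> ('e, 'a) melt \<Rightarrow> ('e, 'a) melt) \<Rightarrow> (int \<Rightarrow> ('e, 'a) melt \<Rightarrow> ('e, 'a) melt)
                  \<Rightarrow> int \<Rightarrow> ('e, 'a::ab_group_add) melt \<times> ('e, 'a) melt \<Rightarrow> ('e, 'a) melt \<times> ('e, 'a) melt" where
  "dN \<xi> \<tau> \<delta> \<alpha> i n = (\<xi> (i - 1) (fst n) + \<delta> i (snd n), \<tau> (i - 1) (fst n) + \<alpha> i (snd n))"

text \<open>The data (E, xi, tau, delta, alpha) make N a semi-free DG B-module: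
  beta bounded below, the maps are R-linear of the stated degrees, and with the
  given B-action, dN is a differential satisfying the Leibniz rule (the
  underlying graded B-module is free on the basis of M, hence semi-free since
  beta_i = 0 for i << 0).\<close>

definition semifree_N :: "('r::comm_ring_1 \<Rightarrow> 'a \<Rightarrow> 'a) \<Rightarrow> (int \<Rightarrow> 'a set) \<Rightarrow> ('a \<Rightarrow> 'a \<Rightarrow> 'a)
     \<Rightarrow> ('a \<Rightarrow> 'a) \<Rightarrow> 'r \<Rightarrow> (int \<Rightarrow> 'e set)
     \<Rightarrow> (int \<Rightarrow> ('e, 'a) melt \<Rightarrow> ('e, 'a) melt) \<Rightarrow> (int \<Rightarrow> ('e, 'a) melt \<Rightarrow> ('e, 'a) melt)
     \<Rightarrow> (int \<Rightarrow> ('e, 'a) melt \<Rightarrow> ('e, 'a) melt) \<Rightarrow> (int \<Rightarrow> ('e, 'a::ab_group_add) melt \<Rightarrow> ('e, 'a) melt)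
     \<Rightarrow> bool" where
  "semifree_N scA Ac mulA dA t E \<xi> \<tau> \<delta> \<alpha> \<longleftrightarrow>
     (\<exists>k0. \<forall>k<k0. E k = {}) \<and>
     (\<forall>i. rlin (scM scA) (scM scA) (Mcar Ac E i) (Mcar Ac E (i - 1)) (\<xi> i)) \<and>
     (\<forall>i. rlin (scM scA) (scM scA) (Mcar Ac E i) (Mcar Ac E i) (\<tau> i)) \<and>
     (\<forall>i. rlin (scM scA) (scM scA) (Mcar Ac E i) (Mcar Ac E (i - 2)) (\<delta> i)) \<and>
     (\<forall>i. rlin (scM scA) (scM scA) (Mcar Ac E i) (Mcar Ac E (i - 1)) (\<alpha> i)) \<and>
     (\<forall>i. \<forall>n\<in>Ncar Ac E i. dN \<xi> \<tau> \<delta> \<alpha> (i - 1) (dN \<xi> \<tau> \<delta> \<alpha> i n) = 0) \<and>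
     (\<forall>i j. \<forall>b\<in>Bcar Ac i. \<forall>n\<in>Ncar Ac E j.
        dN \<xi> \<tau> \<delta> \<alpha> (i + j) (actN mulA i b n) =
          actN mulA (i - 1) (dB scA dA t b) n + sgnx i (actN mulA i b (dN \<xi> \<tau> \<delta> \<alpha> j n)))"

text \<open>A homomorphism of R-complexes of degree p is a family of R-linear maps
  S_i : N_i \<rightarrow> N'_(i+p) (no compatibility with differentials); it is a DG
  B-module homomorphism if moreover S(bn) = (-1)^(p|b|) b S(n).\<close>

definition rcomplex_hom :: "('r \<Rightarrow> 'a \<Rightarrow> 'a) \<Rightarrow> (int \<Rightarrow> 'a::ab_group_add set) \<Rightarrow> (int \<Rightarrow> 'e set)
     \<Rightarrow> (int \<Rightarrow> 'f set) \<Rightarrow> int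
     \<Rightarrow> (int \<Rightarrow> ('e, 'a) melt \<times> ('e, 'a) melt \<Rightarrow> ('f, 'a) melt \<times> ('f, 'a) melt) \<Rightarrow> bool" where
  "rcomplex_hom scA Ac E E' p S \<longleftrightarrow>
     (\<forall>i. rlin (scN scA) (scN scA) (Ncar Ac E i) (Ncar Ac E' (i + p)) (S i))"

definition dg_hom :: "('r \<Rightarrow> 'a \<Rightarrow> 'a) \<Rightarrow> (int \<Rightarrow> 'a::ab_group_add set) \<Rightarrow> ('a \<Rightarrow> 'a \<Rightarrow> 'a)
     \<Rightarrow> (int \<Rightarrow> 'e set) \<Rightarrow> (int \<Rightarrow> 'f set) \<Rightarrow> int
     \<Rightarrow> (int \<Rightarrow> ('e, 'a) melt \<times> ('e, 'a) melt \<Rightarrow> ('f, 'a) melt \<times> ('f, 'a) melt) \<Rightarrow> bool" where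
  "dg_hom scA Ac mulA E E' p S \<longleftrightarrow>
     rcomplex_hom scA Ac E E' p S \<and>
     (\<forall>i j. \<forall>b\<in>Bcar Ac i. \<forall>n\<in>Ncar Ac E j.
        S (i + j) (actN mulA i b n) = sgnx (p * i) (actN mulA i b (S j n)))"

end

theory Submission
  imports Defs
begin

text \<open>Acting with the Koszul generator (1, 0) in B_1 moves the second column of S to the first,
  which forces the upper triangular shape with diagonal entries (-1)^p z_(i-1) and z_i;
  acting with (0, a) for a in A_i yields the two commutation rules for v and z.  Conversely the
  rules, once known on the basis of A_i, extend to all of A_i by R-linearity in a, and then
  S(bn) = (-1)^(p|b|) b S(n) is a direct sign computation on the matrix form.\<close>

lemma sgnx_zero [simp]: "sgnx k 0 = 0"
  by (simp add: sgnx_def)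

lemma sgnx_add: "sgnx k (x + y) = sgnx k x + sgnx k y"
  by (simp add: sgnx_def)

lemma sgnx_sgnx: "sgnx k (sgnx l x) = sgnx (k + l) x"
  by (simp add: sgnx_def)

lemma sgnx_Pair: "sgnx k (a, b) = (sgnx k a, sgnx k b)"
  by (simp add: sgnx_def)

lemma rlin_add: "rlin sc sc' X Y f \<Longrightarrow> x \<in> X \<Longrightarrow> y \<in> X \<Longrightarrow> f (x + y) = f x + f y"
  by (simp add: rlin_def)

lemma rlin_scale: "rlin sc sc' X Y f \<Longrightarrow> x \<in> X \<Longrightarrow> f (sc c x) = sc' c (f x)"
  by (simp add: rlin_def)

lemma rlin_mem: "rlin sc sc' X Y f \<Longrightarrow> x \<in> X \<Longrightarrow> f x \<in> Y"
  by (auto simp: rlin_def)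

lemma rlin_uminus:
  assumes f: "rlin sc sc' X Y f" and "x \<in> X" "- x \<in> X" "0 \<in> X"
  shows "f (- x) = - f x"
proof -
  have "f 0 = 0" using rlin_add[OF f \<open>0 \<in> X\<close> \<open>0 \<in> X\<close>] by simp
  moreover have "f 0 = f x + f (- x)" using rlin_add[OF f \<open>x \<in> X\<close> \<open>- x \<in> X\<close>] by simp
  ultimately show ?thesis by (simp add: eq_neg_iff_add_eq_0 add.commute)
qed

lemma rlin_sgnx: "rlin sc sc' X Y f \<Longrightarrow> x \<in> X \<Longrightarrow> - x \<in> X \<Longrightarrow> 0 \<in> X \<Longrightarrow> f (sgnx k x) = sgnx k (f x)"
  by (simp add: sgnx_def rlin_uminus)

lemma rlin_fst:
  "rlin sc (scN scA) X (Y \<times> Z) f \<Longrightarrow> rlin sc (scM scA) X Y (\<lambda>x. fst (f x))"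
  by (fastforce simp: rlin_def scN_def)

lemma rlin_snd:
  "rlin sc (scN scA) X (Y \<times> Z) f \<Longrightarrow> rlin sc (scM scA) X Z (\<lambda>x. snd (f x))"
  by (fastforce simp: rlin_def scN_def)

lemma eq_on_span_if_additive_homogeneous:
  fixes L1 L2 :: "'a::ab_group_add \<Rightarrow> 'b::ab_group_add"
  assumes md: "module scA" and sub: "module.subspace scA A"
    and span: "module.span scA G = A" and "G \<subseteq> A"
    and add1: "\<forall>a\<in>A. \<forall>b\<in>A. L1 (a + b) = L1 a + L1 b"
    and add2: "\<forall>a\<in>A. \<forall>b\<in>A. L2 (a + b) = L2 a + L2 b"
    and scale1: "\<forall>c. \<forall>a\<in>A. L1 (scA c a) = sc c (L1 a)"
    and scale2: "\<forall>c. \<forall>a\<in>A. L2 (scA c a) = sc c (L2 a)"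
    and on_G: "\<forall>g\<in>G. L1 g = L2 g"
    and "a \<in> A"
  shows "L1 a = L2 a"
proof -
  have zero: "0 \<in> A" and add: "\<And>x y. x \<in> A \<Longrightarrow> y \<in> A \<Longrightarrow> x + y \<in> A"
    and scale: "\<And>c x. x \<in> A \<Longrightarrow> scA c x \<in> A"
    using sub md by (auto simp: module.subspace_def)
  have "L1 0 = 0" "L2 0 = 0"
    using add1 add2 zero by (metis add_cancel_left_left add_0)+
  then have base: "0 \<in> A \<and> L1 0 = L2 0" using zero by simp
  have step: "scA c x + y \<in> A \<and> L1 (scA c x + y) = L2 (scA c x + y)"
    if "x \<in> G" "y \<in> A \<and> L1 y = L2 y" for c x y
  proof -
    have "x \<in> A" using that \<open>G \<subseteq> A\<close> by auto
    then show ?thesis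
      using that add scale add1 add2 scale1 scale2 on_G by simp
  qed
  have "a \<in> module.span scA G" using span \<open>a \<in> A\<close> by simp
  then have "a \<in> A \<and> L1 a = L2 a"
    by (rule module.span_induct_alt[OF md, where h = "\<lambda>a. a \<in> A \<and> L1 a = L2 a"])
       (use base step in auto)
  then show ?thesis by simp
qed

definition hom_z :: "(int \<Rightarrow> 'm \<times> 'm \<Rightarrow> 'n \<times> 'n) \<Rightarrow> int \<Rightarrow> 'm::zero \<Rightarrow> 'n" where
  "hom_z S i y = snd (S i (0, y))"

definition hom_v :: "(int \<Rightarrow> 'm \<times> 'm \<Rightarrow> 'n \<times> 'n) \<Rightarrow> int \<Rightarrow> 'm::zero \<Rightarrow> 'n" where
  "hom_v S i y = fst (S i (0, y))"

lemma second_column_entries: "S i (0, y) = (hom_v S i y, hom_z S i y)"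
  by (simp add: hom_z_def hom_v_def)

context
  fixes scA :: "'r::comm_ring_1 \<Rightarrow> 'a::ab_group_add \<Rightarrow> 'a"
    and Ac :: "int \<Rightarrow> 'a set" and mulA :: "'a \<Rightarrow> 'a \<Rightarrow> 'a" and oneA :: 'a
    and dA :: "'a \<Rightarrow> 'a"
  assumes A: "cdga scA Ac mulA oneA dA"
begin

lemma module_scA: "module scA"
  using A unfolding cdga_def by (elim conjE) blast

lemma Ac_subspace: "module.subspace scA (Ac i)"
  using A unfolding cdga_def by (elim conjE) blast

lemma Ac_zero: "0 \<in> Ac i"
  using Ac_subspace module_scA by (simp add: module.subspace_def)

lemma Ac_add: "x \<in> Ac i \<Longrightarrow> y \<in> Ac i \<Longrightarrow> x + y \<in> Ac i"
  using Ac_subspace module_scA by (simp add: module.subspace_def)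

lemma Ac_uminus: "x \<in> Ac i \<Longrightarrow> - x \<in> Ac i"
  using Ac_subspace module_scA
  by (metis module.scale_minus_left module.scale_one module.subspace_def)

lemma mulA_closed: "a \<in> Ac i \<Longrightarrow> b \<in> Ac j \<Longrightarrow> mulA a b \<in> Ac (i + j)"
  using A unfolding cdga_def by (elim conjE) blast

lemma mulA_add_left: "a \<in> Ac i \<Longrightarrow> a' \<in> Ac i \<Longrightarrow> b \<in> Ac j \<Longrightarrow> mulA (a + a') b = mulA a b + mulA a' b"
  using A unfolding cdga_def by (elim conjE) blast

lemma mulA_add_right: "a \<in> Ac i \<Longrightarrow> a' \<in> Ac i \<Longrightarrow> b \<in> Ac j \<Longrightarrow> mulA b (a + a') = mulA b a + mulA b a'"
  using A unfolding cdga_def by (elim conjE) blast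

lemma mulA_scale_left: "a \<in> Ac i \<Longrightarrow> b \<in> Ac j \<Longrightarrow> mulA (scA c a) b = scA c (mulA a b)"
  using A unfolding cdga_def by (elim conjE) blast

lemma oneA_mem: "oneA \<in> Ac 0"
  using A unfolding cdga_def by (elim conjE) blast

lemma oneA_mulA: "a \<in> Ac i \<Longrightarrow> mulA oneA a = a"
proof -
  have "\<forall>i. \<forall>a\<in>Ac i. mulA oneA a = a \<and> mulA a oneA = a"
    using A unfolding cdga_def by (elim conjE) assumption
  then show "a \<in> Ac i \<Longrightarrow> mulA oneA a = a" by blast
qed

lemma mulA_zero_left: "b \<in> Ac j \<Longrightarrow> mulA 0 b = 0"
  using mulA_add_left[of 0 0 0 b j] Ac_zero by simp

lemma mulA_zero_right: "a \<in> Ac i \<Longrightarrow> mulA a 0 = 0"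
  using mulA_add_right[of 0 0 0 a i] Ac_zero by simp

lemma mulA_uminus_right: "a \<in> Ac i \<Longrightarrow> b \<in> Ac j \<Longrightarrow> mulA a (- b) = - mulA a b"
  using mulA_add_right[of b j "- b" a i] Ac_uminus mulA_zero_right
  by (simp add: eq_neg_iff_add_eq_0 add.commute)

lemma Mcar_mem: "m \<in> Mcar Ac E i \<Longrightarrow> m j e \<in> Ac j"
  by (simp add: Mcar_def)

lemma Mcar_zero: "0 \<in> Mcar Ac E i"
  by (simp add: Mcar_def Ac_zero)

lemma Mcar_add:
  assumes "m \<in> Mcar Ac E i" "m' \<in> Mcar Ac E i"
  shows "m + m' \<in> Mcar Ac E i"
proof -
  have "{(j, e). (m + m') j e \<noteq> 0} \<subseteq> {(j, e). m j e \<noteq> 0} \<union> {(j, e). m' j e \<noteq> 0}"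
    by auto
  then show ?thesis
    using assms unfolding Mcar_def by (auto intro: Ac_add finite_subset)
qed

lemma Mcar_uminus: "m \<in> Mcar Ac E i \<Longrightarrow> - m \<in> Mcar Ac E i"
  unfolding Mcar_def by (auto intro: Ac_uminus)

lemma Mcar_sgnx: "m \<in> Mcar Ac E i \<Longrightarrow> sgnx k m \<in> Mcar Ac E i"
  by (simp add: sgnx_def Mcar_uminus)

lemma Ncar_zero_left: "y \<in> Mcar Ac E i \<Longrightarrow> (0, y) \<in> Ncar Ac E i"
  by (simp add: Ncar_def Mcar_zero)

lemma Ncar_zero_right: "x \<in> Mcar Ac E (i - 1) \<Longrightarrow> (x, 0) \<in> Ncar Ac E i"
  by (simp add: Ncar_def Mcar_zero)

lemma actM_mem:
  assumes a: "a \<in> Ac k" and m: "m \<in> Mcar Ac E j"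
  shows "actM mulA k a m \<in> Mcar Ac E (k + j)"
proof -
  have nz: "m (j' - k) e \<noteq> 0" if "actM mulA k a m j' e \<noteq> 0" for j' e
    using that a mulA_zero_right by (auto simp: actM_def)
  have "{(j', e). actM mulA k a m j' e \<noteq> 0} \<subseteq> (\<lambda>(j, e). (j + k, e)) ` {(j, e). m j e \<noteq> 0}"
    by (auto dest!: nz intro!: image_eqI[where x = "(_ - k, _)"])
  moreover have "finite {(j, e). m j e \<noteq> 0}"
    using m by (simp add: Mcar_def)
  ultimately have "finite {(j', e). actM mulA k a m j' e \<noteq> 0}"
    by (meson finite_imageI finite_subset)
  moreover have "actM mulA k a m j' e \<in> Ac j'" for j' e
    using mulA_closed[OF a Mcar_mem[OF m, of "j' - k" e]] by (simp add: actM_def)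
  moreover have "e \<in> E (k + j - j')" if "actM mulA k a m j' e \<noteq> 0" for j' e
  proof -
    have "e \<in> E (j - (j' - k))" using m nz[OF that] by (simp add: Mcar_def)
    then show ?thesis by (simp add: algebra_simps)
  qed
  ultimately show ?thesis by (simp add: Mcar_def)
qed

lemma actM_add_right:
  "a \<in> Ac k \<Longrightarrow> m \<in> Mcar Ac E j \<Longrightarrow> m' \<in> Mcar Ac E' j' \<Longrightarrow>
   actM mulA k a (m + m') = actM mulA k a m + actM mulA k a m'"
  by (auto simp: fun_eq_iff actM_def Mcar_def intro!: mulA_add_right)

lemma actM_sgnx_right:
  "a \<in> Ac k \<Longrightarrow> m \<in> Mcar Ac E j \<Longrightarrow> actM mulA k a (sgnx l m) = sgnx l (actM mulA k a m)"
  by (auto simp: sgnx_def fun_eq_iff actM_def Mcar_def intro!: mulA_uminus_right)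

lemma actM_add_left:
  "a \<in> Ac k \<Longrightarrow> a' \<in> Ac k \<Longrightarrow> m \<in> Mcar Ac E j \<Longrightarrow>
   actM mulA k (a + a') m = actM mulA k a m + actM mulA k a' m"
  by (auto simp: fun_eq_iff actM_def Mcar_def intro!: mulA_add_left)

lemma actM_scale_left:
  "a \<in> Ac k \<Longrightarrow> m \<in> Mcar Ac E j \<Longrightarrow> actM mulA k (scA c a) m = scM scA c (actM mulA k a m)"
  by (auto simp: fun_eq_iff actM_def scM_def Mcar_def intro!: mulA_scale_left)

lemma actM_zero_left: "m \<in> Mcar Ac E j \<Longrightarrow> actM mulA k 0 m = 0"
  by (auto simp: fun_eq_iff actM_def Mcar_def intro!: mulA_zero_left)

lemma actM_oneA: "m \<in> Mcar Ac E j \<Longrightarrow> actM mulA 0 oneA m = m"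
  by (auto simp: fun_eq_iff actM_def Mcar_def intro!: oneA_mulA)

lemma scM_zero: "scM scA c 0 = 0"
  using module_scA by (auto simp: fun_eq_iff scM_def module.scale_zero_right)

lemma scM_sgnx: "scM scA c (sgnx l m) = sgnx l (scM scA c m)"
  using module_scA by (auto simp: fun_eq_iff sgnx_def scM_def module.scale_minus_right)

lemma dg_hom_actN:
  "dg_hom scA Ac mulA E E' p S \<Longrightarrow> b \<in> Bcar Ac i \<Longrightarrow> n \<in> Ncar Ac E j \<Longrightarrow>
   S (i + j) (actN mulA i b n) = sgnx (p * i) (actN mulA i b (S j n))"
  by (simp add: dg_hom_def)

lemma fixed_bases_mem: "fixed_bases scA Ac r gam \<Longrightarrow> s \<in> {1..r i} \<Longrightarrow> gam i s \<in> Ac i"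
  by (simp add: fixed_bases_def)

lemma rcomplex_hom_second_column:
  assumes "rcomplex_hom scA Ac E E' p S"
  shows "rlin (scM scA) (scN scA) (Mcar Ac E i) (Ncar Ac E' (i + p)) (\<lambda>y. S i (0, y))"
proof -
  have S: "rlin (scN scA) (scN scA) (Ncar Ac E i) (Ncar Ac E' (i + p)) (S i)"
    using assms by (simp add: rcomplex_hom_def)
  have "S i (0, x + y) = S i (0, x) + S i (0, y)" if "x \<in> Mcar Ac E i" "y \<in> Mcar Ac E i" for x y
    using rlin_add[OF S Ncar_zero_left[OF that(1)] Ncar_zero_left[OF that(2)]] by simp
  moreover have "S i (0, scM scA c y) = scN scA c (S i (0, y))" if "y \<in> Mcar Ac E i" for c y
    using rlin_scale[OF S Ncar_zero_left[OF that]] by (simp add: scN_def scM_zero)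
  ultimately show ?thesis
    using rlin_mem[OF S Ncar_zero_left] by (auto simp: rlin_def)
qed

lemma hom_z_rlin:
  "rcomplex_hom scA Ac E E' p S \<Longrightarrow> rlin (scM scA) (scM scA) (Mcar Ac E i) (Mcar Ac E' (i + p)) (hom_z S i)"
  using rlin_snd[OF rcomplex_hom_second_column[unfolded Ncar_def]]
  by (simp add: hom_z_def[abs_def])

lemma hom_v_rlin:
  "rcomplex_hom scA Ac E E' p S \<Longrightarrow> rlin (scM scA) (scM scA) (Mcar Ac E i) (Mcar Ac E' (i + p - 1)) (hom_v S i)"
  using rlin_fst[OF rcomplex_hom_second_column[unfolded Ncar_def]]
  by (simp add: hom_v_def[abs_def])

lemma dg_hom_matrix_form:
  assumes S: "dg_hom scA Ac mulA E E' p S"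
    and x: "x \<in> Mcar Ac E (i - 1)" and y: "y \<in> Mcar Ac E i"
  shows "S i (x, y) = (sgnx p (hom_z S (i - 1) x) + hom_v S i y, hom_z S i y)"
proof -
  have rc: "rcomplex_hom scA Ac E E' p S" using S by (simp add: dg_hom_def)
  have z: "hom_z S (i - 1) x \<in> Mcar Ac E' (i - 1 + p)"
    using rlin_mem[OF hom_z_rlin[OF rc] x] .
  have v: "hom_v S (i - 1) x \<in> Mcar Ac E' (i - 1 + p - 1)"
    using rlin_mem[OF hom_v_rlin[OF rc] x] .
  have e: "(oneA, 0) \<in> Bcar Ac 1" using oneA_mem Ac_zero by (simp add: Bcar_def)
  have "actN mulA 1 (oneA, 0) (0, x) = (x, 0)"
    using actM_oneA[OF x] actM_zero_left[OF x] mulA_zero_right[OF Ac_zero]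
    by (simp add: actN_def actM_def sgnx_def fun_eq_iff)
  moreover have "actN mulA 1 (oneA, 0) (S (i - 1) (0, x)) = (hom_z S (i - 1) x, 0)"
    using actM_oneA[OF z] actM_zero_left[OF v] actM_zero_left[OF z]
    by (simp add: actN_def second_column_entries)
  ultimately have "S i (x, 0) = (sgnx p (hom_z S (i - 1) x), 0)"
    using dg_hom_actN[OF S e Ncar_zero_left[OF x]] by (simp add: sgnx_Pair)
  moreover have "S i ((x, 0) + (0, y)) = S i (x, 0) + S i (0, y)"
    using rlin_add[OF rc[unfolded rcomplex_hom_def, rule_format] Ncar_zero_right[OF x] Ncar_zero_left[OF y]] .
  ultimately show ?thesis by (simp add: second_column_entries)
qed

lemma dg_hom_second_column_actM:
  assumes S: "dg_hom scA Ac mulA E E' p S"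
    and a: "a \<in> Ac i" and m: "m \<in> Mcar Ac E j"
  shows "hom_v S (i + j) (actM mulA i a m) = sgnx (i * (p + 1)) (actM mulA i a (hom_v S j m))"
    and "hom_z S (i + j) (actM mulA i a m) = sgnx (i * p) (actM mulA i a (hom_z S j m))"
proof -
  have rc: "rcomplex_hom scA Ac E E' p S" using S by (simp add: dg_hom_def)
  have b: "(0, a) \<in> Bcar Ac i" using a Ac_zero by (simp add: Bcar_def)
  have "actN mulA i (0, a) (0, m) = (0, actM mulA i a m)"
    using actM_zero_left[OF m] mulA_zero_right[OF a] by (simp add: actN_def actM_def sgnx_def fun_eq_iff)
  moreover have "actN mulA i (0, a) (S j (0, m)) =
      (sgnx i (actM mulA i a (hom_v S j m)), actM mulA i a (hom_z S j m))"
    using actM_zero_left[OF rlin_mem[OF hom_z_rlin[OF rc] m]] by (simp add: actN_def second_column_entries)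
  ultimately have "S (i + j) (0, actM mulA i a m) =
      (sgnx (p * i + i) (actM mulA i a (hom_v S j m)), sgnx (p * i) (actM mulA i a (hom_z S j m)))"
    using dg_hom_actN[OF S b Ncar_zero_left[OF m]] by (simp add: sgnx_Pair sgnx_sgnx)
  moreover have "p * i + i = i * (p + 1)" by (simp add: algebra_simps)
  ultimately show "hom_v S (i + j) (actM mulA i a m) = sgnx (i * (p + 1)) (actM mulA i a (hom_v S j m))"
    and "hom_z S (i + j) (actM mulA i a m) = sgnx (i * p) (actM mulA i a (hom_z S j m))"
    by (simp_all add: second_column_entries mult.commute)
qed

lemma actM_commute_if_on_basis:
  assumes B: "fixed_bases scA Ac r gam"
    and f: "\<And>i. rlin (scM scA) (scM scA) (Mcar Ac E i) (Mcar Ac E' (d i)) (f i)"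
    and on_basis: "\<And>i j s m. s \<in> {1..r i} \<Longrightarrow> m \<in> Mcar Ac E j \<Longrightarrow>
      f (i + j) (actM mulA i (gam i s) m) = sgnx (i * q) (actM mulA i (gam i s) (f j m))"
    and a: "a \<in> Ac i" and m: "m \<in> Mcar Ac E j"
  shows "f (i + j) (actM mulA i a m) = sgnx (i * q) (actM mulA i a (f j m))"
proof (rule eq_on_span_if_additive_homogeneous[OF module_scA Ac_subspace _ _ _ _ _ _ _ a])
  have fm: "f j m \<in> Mcar Ac E' (d j)" using rlin_mem[OF f m] .
  show "module.span scA (gam i ` {1..r i}) = Ac i" "gam i ` {1..r i} \<subseteq> Ac i"
    using B by (auto simp: fixed_bases_def)
  show "\<forall>a\<in>Ac i. \<forall>b\<in>Ac i. f (i + j) (actM mulA i (a + b) m) =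
      f (i + j) (actM mulA i a m) + f (i + j) (actM mulA i b m)"
    using actM_add_left[OF _ _ m] rlin_add[OF f actM_mem[OF _ m] actM_mem[OF _ m]] by simp
  show "\<forall>a\<in>Ac i. \<forall>b\<in>Ac i. sgnx (i * q) (actM mulA i (a + b) (f j m)) =
      sgnx (i * q) (actM mulA i a (f j m)) + sgnx (i * q) (actM mulA i b (f j m))"
    using actM_add_left[OF _ _ fm] by (simp add: sgnx_add)
  show "\<forall>c. \<forall>a\<in>Ac i. f (i + j) (actM mulA i (scA c a) m) = scM scA c (f (i + j) (actM mulA i a m))"
    using actM_scale_left[OF _ m] rlin_scale[OF f actM_mem[OF _ m]] by simp
  show "\<forall>c. \<forall>a\<in>Ac i. sgnx (i * q) (actM mulA i (scA c a) (f j m)) =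
      scM scA c (sgnx (i * q) (actM mulA i a (f j m)))"
    using actM_scale_left[OF _ fm] by (simp add: scM_sgnx)
  show "\<forall>g\<in>gam i ` {1..r i}. f (i + j) (actM mulA i g m) = sgnx (i * q) (actM mulA i g (f j m))"
    using on_basis[OF _ m] by blast
qed

lemma dg_hom_if_matrix_form:
  assumes rc: "rcomplex_hom scA Ac E E' p S"
    and z: "\<And>i. rlin (scM scA) (scM scA) (Mcar Ac E i) (Mcar Ac E' (i + p)) (z i)"
    and v: "\<And>i. rlin (scM scA) (scM scA) (Mcar Ac E i) (Mcar Ac E' (i + p - 1)) (v i)"
    and matrix: "\<And>i x y. x \<in> Mcar Ac E (i - 1) \<Longrightarrow> y \<in> Mcar Ac E i \<Longrightarrow>
      S i (x, y) = (sgnx p (z (i - 1) x) + v i y, z i y)"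
    and z_actM: "\<And>i j a m. a \<in> Ac i \<Longrightarrow> m \<in> Mcar Ac E j \<Longrightarrow>
      z (i + j) (actM mulA i a m) = sgnx (i * p) (actM mulA i a (z j m))"
    and v_actM: "\<And>i j a m. a \<in> Ac i \<Longrightarrow> m \<in> Mcar Ac E j \<Longrightarrow>
      v (i + j) (actM mulA i a m) = sgnx (i * (p + 1)) (actM mulA i a (v j m))"
  shows "dg_hom scA Ac mulA E E' p S"
proof -
  have "S (i + j) (actN mulA i b n) = sgnx (p * i) (actN mulA i b (S j n))"
    if bB: "b \<in> Bcar Ac i" and nN: "n \<in> Ncar Ac E j" for i j b n
  proof -
    obtain a' a where b: "b = (a', a)" and a': "a' \<in> Ac (i - 1)" and a: "a \<in> Ac i"
      using bB by (auto simp: Bcar_def)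
    obtain x y where n: "n = (x, y)" and x: "x \<in> Mcar Ac E (j - 1)" and y: "y \<in> Mcar Ac E j"
      using nN by (auto simp: Ncar_def)
    have deg: "i - 1 + j = i + j - 1" "i + (j - 1) = i + j - 1" by simp_all
    define y1 where "y1 = actM mulA (i - 1) a' y"
    define x1 where "x1 = actM mulA i a x"
    have y1: "y1 \<in> Mcar Ac E (i + j - 1)" using actM_mem[OF a' y] deg by (simp add: y1_def)
    have x1: "x1 \<in> Mcar Ac E (i + j - 1)" using actM_mem[OF a x] deg by (simp add: x1_def)
    have "z (i + j - 1) (y1 + sgnx i x1) = z (i + j - 1) y1 + sgnx i (z (i + j - 1) x1)"
      using rlin_add[OF z y1 Mcar_sgnx[OF x1]] rlin_sgnx[OF z x1 Mcar_uminus[OF x1] Mcar_zero]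
      by simp
    moreover have "z (i + j - 1) y1 = sgnx ((i - 1) * p) (actM mulA (i - 1) a' (z j y))"
      using z_actM[OF a' y] deg by (simp add: y1_def)
    moreover have "z (i + j - 1) x1 = sgnx (i * p) (actM mulA i a (z (j - 1) x))"
      using z_actM[OF a x] deg by (simp add: x1_def)
    ultimately have lhs: "S (i + j) (actN mulA i b n) =
        (sgnx p (sgnx ((i - 1) * p) (actM mulA (i - 1) a' (z j y))
                 + sgnx i (sgnx (i * p) (actM mulA i a (z (j - 1) x))))
           + sgnx (i * (p + 1)) (actM mulA i a (v j y)),
         sgnx (i * p) (actM mulA i a (z j y)))"
      using matrix[OF Mcar_add[OF y1 Mcar_sgnx[OF x1]] actM_mem[OF a y]] v_actM[OF a y] z_actM[OF a y]
      by (simp add: actN_def b n y1_def x1_def)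
    have zx: "sgnx p (z (j - 1) x) \<in> Mcar Ac E' (j - 1 + p)"
      using Mcar_sgnx[OF rlin_mem[OF z x]] .
    have rhs: "sgnx (p * i) (actN mulA i b (S j n)) =
        sgnx (p * i) (actM mulA (i - 1) a' (z j y)
                      + sgnx i (sgnx p (actM mulA i a (z (j - 1) x)) + actM mulA i a (v j y)),
                      actM mulA i a (z j y))"
      using matrix[OF x y] actM_add_right[OF a zx rlin_mem[OF v y]] actM_sgnx_right[OF a rlin_mem[OF z x]]
      by (simp add: actN_def b n)
    show ?thesis
      unfolding lhs rhs by (cases "even i"; cases "even p"; simp add: sgnx_def algebra_simps)
  qed
  then show ?thesis using rc by (simp add: dg_hom_def)
qed

end

theorem lemma2p11:
  fixes scA :: "'r::comm_ring_1 \<Rightarrow> 'a::ab_group_add \<Rightarrow> 'a"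
    and Ac :: "int \<Rightarrow> 'a set" and mulA :: "'a \<Rightarrow> 'a \<Rightarrow> 'a" and oneA :: 'a
    and dA :: "'a \<Rightarrow> 'a" and r :: "int \<Rightarrow> nat" and gam :: "int \<Rightarrow> nat \<Rightarrow> 'a" and t :: 'r
    and E :: "int \<Rightarrow> 'e set"
    and \<xi> \<tau> \<delta> \<alpha> :: "int \<Rightarrow> ('e, 'a) melt \<Rightarrow> ('e, 'a) melt"
    and E' :: "int \<Rightarrow> 'f set"
    and \<xi>' \<tau>' \<delta>' \<alpha>' :: "int \<Rightarrow> ('f, 'a) melt \<Rightarrow> ('f, 'a) melt"
    and p :: int
    and S :: "int \<Rightarrow> ('e, 'a) melt \<times> ('e, 'a) melt \<Rightarrow> ('f, 'a) melt \<times> ('f, 'a) melt"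
  assumes "noetherian_cring TYPE('r)"
    and "cdga scA Ac mulA oneA dA"
    and "fixed_bases scA Ac r gam"
    and "semifree_N scA Ac mulA dA t E \<xi> \<tau> \<delta> \<alpha>"
    and "semifree_N scA Ac mulA dA t E' \<xi>' \<tau>' \<delta>' \<alpha>'"
  shows "dg_hom scA Ac mulA E E' p S \<longleftrightarrow>
    rcomplex_hom scA Ac E E' p S \<and>
    (\<exists>z v. (\<forall>i. rlin (scM scA) (scM scA) (Mcar Ac E i) (Mcar Ac E' (i + p)) (z i)) \<and>
           (\<forall>i. rlin (scM scA) (scM scA) (Mcar Ac E i) (Mcar Ac E' (i + p - 1)) (v i)) \<and>
           (\<forall>i. \<forall>x\<in>Mcar Ac E (i - 1). \<forall>y\<in>Mcar Ac E i.
               S i (x, y) = (sgnx p (z (i - 1) x) + v i y, z i y)) \<and>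
           (\<forall>i j. \<forall>s\<in>{1..r i}. \<forall>m\<in>Mcar Ac E j.
               v (i + j) (actM mulA i (gam i s) m) = sgnx (i * (p + 1)) (actM mulA i (gam i s) (v j m)) \<and>
               z (i + j) (actM mulA i (gam i s) m) = sgnx (i * p) (actM mulA i (gam i s) (z j m))))"
    (is "_ \<longleftrightarrow> _ \<and> (\<exists>z v. ?entries z v)")
proof
  assume S: "dg_hom scA Ac mulA E E' p S"
  then have rc: "rcomplex_hom scA Ac E E' p S" by (simp add: dg_hom_def)
  have "?entries (hom_z S) (hom_v S)"
    using hom_z_rlin[OF assms(2) rc] hom_v_rlin[OF assms(2) rc] dg_hom_matrix_form[OF assms(2) S]
      dg_hom_second_column_actM[OF assms(2) S fixed_bases_mem[OF assms(2,3)]]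
    by blast
  then show "rcomplex_hom scA Ac E E' p S \<and> (\<exists>z v. ?entries z v)" using rc by blast
next
  assume "rcomplex_hom scA Ac E E' p S \<and> (\<exists>z v. ?entries z v)"
  then obtain z v where rc: "rcomplex_hom scA Ac E E' p S" and entries: "?entries z v"
    by blast
  have z: "\<And>i. rlin (scM scA) (scM scA) (Mcar Ac E i) (Mcar Ac E' (i + p)) (z i)"
    and v: "\<And>i. rlin (scM scA) (scM scA) (Mcar Ac E i) (Mcar Ac E' (i + p - 1)) (v i)"
    using entries by blast+
  show "dg_hom scA Ac mulA E E' p S"
  proof (rule dg_hom_if_matrix_form[OF assms(2) rc z v])
    show "S i (x, y) = (sgnx p (z (i - 1) x) + v i y, z i y)"
      if "x \<in> Mcar Ac E (i - 1)" "y \<in> Mcar Ac E i" for i x y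
      using entries that by blast
    show "z (i + j) (actM mulA i a m) = sgnx (i * p) (actM mulA i a (z j m))"
      if "a \<in> Ac i" "m \<in> Mcar Ac E j" for i j a m
      using actM_commute_if_on_basis[OF assms(2,3) z _ that] entries by blast
    show "v (i + j) (actM mulA i a m) = sgnx (i * (p + 1)) (actM mulA i a (v j m))"
      if "a \<in> Ac i" "m \<in> Mcar Ac E j" for i j a m
      using actM_commute_if_on_basis[OF assms(2,3) v _ that] entries by blast
  qed
qed

end
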